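(* Let $\psi:\mathbb{R}_{\geq 0}\to\mathbb{R}$ be a neighbor function. Then for any $x,y,t$ with $0\leq x<y$ and $t\geq 0$: (1) $\psi^{-1}$ exists and is increasing; (2) $|\psi(y+t)-\psi(x+t)|\leq|\psi(y)-\psi(x)|$; (3) $|I_{\psi,t}(y)|\geq|I_{\psi,t}(x)|$; (4) $\dfrac{|I_{\psi,t}(y)|}{y}\leq\dfrac{|I_{\psi,t}(x)|}{x}$.
   Context: A neighbor function is a function $\psi:\mathbb{R}_{\geq 0}\to\mathbb{R}$ that is (i) strictly increasing, (ii) continuous, (iii) concave, and (iv) such that $g(x)=\psi(e^{x})$ is convex as a function of $x\in\mathbb{R}$. For a neighbor function $\psi$, a number $\sigma\geq 0$ and $y\geq 0$, the uncertainty interval around $y$ is $I_{\psi,\sigma}(y)=[L,U]$ with $L=\psi^{-1}\big(\max(\psi(0),\psi(y)-\sigma)\big)$ and $U=\psi^{-1}\big(\psi(y)+\sigma\big)$; its length is $|I_{\psi,\sigma}(y)|=U-L$. *)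

theory Defs
  imports "HOL-Analysis.Analysis"
begin

text \<open>A neighbor function psi : [0,inf) -> R: strictly increasing, continuous, concave,
  and x |-> psi (exp x) convex on R. Values of psi outside [0,inf) are irrelevant.\<close>
definition neighbor_function :: "(real \<Rightarrow> real) \<Rightarrow> bool" where
  "neighbor_function \<psi> \<longleftrightarrow>
     strict_mono_on {0..} \<psi> \<and> continuous_on {0..} \<psi> \<and> concave_on {0..} \<psi> \<and>
     convex_on UNIV (\<lambda>x. \<psi> (exp x))"

definition psi_inv :: "(real \<Rightarrow> real) \<Rightarrow> real \<Rightarrow> real" where
  "psi_inv \<psi> = the_inv_into {0..} \<psi>"

definition unc_lower :: "(real \<Rightarrow> real) \<Rightarrow> real \<Rightarrow> real \<Rightarrow> real" where
  "unc_lower \<psi> \<sigma> y = psi_inv \<psi> (max (\<psi> 0) (\<psi> y - \<sigma>))"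

definition unc_upper :: "(real \<Rightarrow> real) \<Rightarrow> real \<Rightarrow> real \<Rightarrow> real" where
  "unc_upper \<psi> \<sigma> y = psi_inv \<psi> (\<psi> y + \<sigma>)"

definition unc_interval :: "(real \<Rightarrow> real) \<Rightarrow> real \<Rightarrow> real \<Rightarrow> real set" where
  "unc_interval \<psi> \<sigma> y = {unc_lower \<psi> \<sigma> y .. unc_upper \<psi> \<sigma> y}"

definition unc_length :: "(real \<Rightarrow> real) \<Rightarrow> real \<Rightarrow> real \<Rightarrow> real" where
  "unc_length \<psi> \<sigma> y = unc_upper \<psi> \<sigma> y - unc_lower \<psi> \<sigma> y"

end

theory Submission
  imports Defs
begin

(* Concavity of psi makes the increments psi (b + d) - psi b decrease in b; this is (2), and
   applied to the endpoints of the uncertainty intervals it shows that the upper endpoint moves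
   at least as far as the lower one, which is (3). Convexity of psi o exp makes the multiplicative
   increments psi (l * b) - psi b increase in b, so the upper endpoint grows at most and the lower
   endpoint at least linearly in y, which is (4). It also forces psi to be unbounded, so psi maps
   [0, inf) onto [psi 0, inf). *)

lemma convex_on_increment_mono:
  fixes f :: "real \<Rightarrow> real"
  assumes f: "convex_on I f" and "a \<in> I" "b + d \<in> I" and "a \<le> b" "0 \<le> d"
  shows "f (a + d) - f a \<le> f (b + d) - f b"
proof (cases "b - a + d = 0")
  case True
  then have "a = b" "d = 0" using assms by auto
  then show ?thesis by simp
next
  case False
  then have pos: "0 < b - a + d" using assms by auto
  define l where "l = d / (b - a + d)"
  have l: "0 \<le> l" "l \<le> 1" using pos assms by (auto simp: l_def field_simps)
  have ld: "l * (b - a + d) = d" using pos by (simp add: l_def)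
  have "f (a + d) \<le> (1 - l) * f a + l * f (b + d)"
    using convex_onD[OF f l assms(2,3)] ld by (simp add: algebra_simps)
  moreover have "f b \<le> l * f a + (1 - l) * f (b + d)"
    using convex_onD[OF f _ _ assms(2,3), of "1 - l"] l ld by (simp add: algebra_simps)
  ultimately show ?thesis by (simp add: algebra_simps)
qed

lemma concave_on_increment_antimono:
  fixes f :: "real \<Rightarrow> real"
  assumes "concave_on I f" and "a \<in> I" "b + d \<in> I" and "a \<le> b" "0 \<le> d"
  shows "f (b + d) - f b \<le> f (a + d) - f a"
  using convex_on_increment_mono[of I "\<lambda>x. - f x" a b d] assms by (simp add: concave_on_def)

lemma convex_on_UNIV_unbounded_above:
  fixes f :: "real \<Rightarrow> real"
  assumes f: "convex_on UNIV f" and "a < b" and "f a < f b"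
  shows "\<exists>z. c \<le> f z"
proof -
  define s where "s = (f a - f b) / (a - b)"
  have s: "0 < s" using assms by (simp add: s_def divide_neg_neg)
  define z where "z = max (b + 1) (a + (c - f a) / s)"
  have "(c - f a) / s \<le> z - a" by (simp add: z_def)
  then have "c - f a \<le> (z - a) * s" using s by (simp add: pos_divide_le_eq)
  then have "c \<le> f a + s * (z - a)" by (simp add: algebra_simps)
  also have "\<dots> \<le> f z"
  proof -
    have "b < z" by (simp add: z_def)
    then have "s \<le> (f a - f z) / (a - z)"
      using convex_on_slope_le(1)[OF f _ _ \<open>a < b\<close>, of z] by (simp add: s_def)
    then show ?thesis using \<open>a < b\<close> \<open>b < z\<close> by (simp add: field_simps)
  qed
  finally show ?thesis ..
qed

locale neighbor =
  fixes \<psi> :: "real \<Rightarrow> real"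
  assumes neighbor_function: "neighbor_function \<psi>"
begin

lemma
  shows psi_strict_mono: "strict_mono_on {0..} \<psi>"
    and psi_continuous_on: "continuous_on {0..} \<psi>"
    and psi_concave_on: "concave_on {0..} \<psi>"
    and psi_exp_convex_on: "convex_on UNIV (\<lambda>x. \<psi> (exp x))"
  using neighbor_function by (simp_all add: neighbor_function_def)

lemma psi_less_iff: "0 \<le> a \<Longrightarrow> 0 \<le> b \<Longrightarrow> \<psi> a < \<psi> b \<longleftrightarrow> a < b"
  using strict_mono_on_less[OF psi_strict_mono] by simp

lemma psi_le_iff: "0 \<le> a \<Longrightarrow> 0 \<le> b \<Longrightarrow> \<psi> a \<le> \<psi> b \<longleftrightarrow> a \<le> b"
  by (meson psi_less_iff linorder_not_le)

lemma psi_unbounded_above: "\<exists>z\<ge>0. c \<le> \<psi> z"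
proof -
  have "\<psi> (exp 0) < \<psi> (exp 1)" by (subst psi_less_iff) auto
  then obtain w where "c \<le> \<psi> (exp w)"
    using convex_on_UNIV_unbounded_above[OF psi_exp_convex_on, of 0 1] by auto
  then show ?thesis by (intro exI[of _ "exp w"]) auto
qed

lemma psi_image: "\<psi> ` {0..} = {\<psi> 0..}"
proof
  show "\<psi> ` {0..} \<subseteq> {\<psi> 0..}" using psi_le_iff by auto
  show "{\<psi> 0..} \<subseteq> \<psi> ` {0..}"
  proof
    fix c assume "c \<in> {\<psi> 0..}"
    moreover obtain z where "0 \<le> z" "c \<le> \<psi> z" using psi_unbounded_above by blast
    moreover have "continuous_on {0..z} \<psi>"
      using psi_continuous_on by (rule continuous_on_subset) auto
    ultimately obtain w where "0 \<le> w" "\<psi> w = c" using IVT'[of \<psi> 0 c z] by auto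
    then show "c \<in> \<psi> ` {0..}" by force
  qed
qed

lemma psi_inj_on: "inj_on \<psi> {0..}"
  using psi_strict_mono by (rule strict_mono_on_imp_inj_on)

lemma psi_bij_betw: "bij_betw \<psi> {0..} {\<psi> 0..}"
  by (simp add: bij_betw_def psi_inj_on psi_image)

lemma
  assumes "\<psi> 0 \<le> c"
  shows psi_inv_nonneg: "0 \<le> psi_inv \<psi> c" and psi_psi_inv: "\<psi> (psi_inv \<psi> c) = c"
proof -
  have "c \<in> \<psi> ` {0..}" using assms psi_image by simp
  then show "0 \<le> psi_inv \<psi> c" "\<psi> (psi_inv \<psi> c) = c"
    using the_inv_into_into[OF psi_inj_on, of c "{0..}"] f_the_inv_into_f[OF psi_inj_on]
    by (simp_all add: psi_inv_def)
qed

lemma psi_inv_le_iff: "\<psi> 0 \<le> c \<Longrightarrow> 0 \<le> z \<Longrightarrow> psi_inv \<psi> c \<le> z \<longleftrightarrow> c \<le> \<psi> z"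
  by (metis psi_inv_nonneg psi_psi_inv psi_le_iff)

lemma le_psi_inv_iff: "\<psi> 0 \<le> c \<Longrightarrow> 0 \<le> z \<Longrightarrow> z \<le> psi_inv \<psi> c \<longleftrightarrow> \<psi> z \<le> c"
  by (metis psi_inv_nonneg psi_psi_inv psi_le_iff)

lemma psi_inv_strict_mono: "strict_mono_on {\<psi> 0..} (psi_inv \<psi>)"
  by (rule strict_mono_onI) (metis atLeast_iff psi_inv_nonneg psi_psi_inv psi_less_iff)

lemma psi_increment_shift_antimono:
  assumes "0 \<le> a" "a \<le> b" "0 \<le> d"
  shows "\<psi> (b + d) - \<psi> b \<le> \<psi> (a + d) - \<psi> a"
  using concave_on_increment_antimono[OF psi_concave_on, of a b d] assms by simp

lemma abs_psi_increment_shift_le: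
  assumes "0 \<le> x" "x \<le> y" "0 \<le> t"
  shows "\<bar>\<psi> (y + t) - \<psi> (x + t)\<bar> \<le> \<bar>\<psi> y - \<psi> x\<bar>"
  using psi_increment_shift_antimono[of x y t] psi_le_iff[of x y] psi_le_iff[of "x + t" "y + t"]
    assms by simp

lemma psi_increment_scale_mono:
  assumes "0 < a" "a \<le> b" "1 \<le> l"
  shows "\<psi> (l * a) - \<psi> a \<le> \<psi> (l * b) - \<psi> b"
proof -
  have "\<psi> (exp (ln a + ln l)) - \<psi> (exp (ln a)) \<le> \<psi> (exp (ln b + ln l)) - \<psi> (exp (ln b))"
    using convex_on_increment_mono[OF psi_exp_convex_on, of "ln a" "ln b" "ln l"] assms by simp
  then show ?thesis using assms by (simp add: exp_add mult.commute)
qed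

lemma psi_unc_upper: "0 \<le> y \<Longrightarrow> 0 \<le> \<sigma> \<Longrightarrow> \<psi> (unc_upper \<psi> \<sigma> y) = \<psi> y + \<sigma>"
  unfolding unc_upper_def by (rule psi_psi_inv) (simp add: add_increasing2 psi_le_iff)

lemma unc_upper_ge: "0 \<le> y \<Longrightarrow> 0 \<le> \<sigma> \<Longrightarrow> y \<le> unc_upper \<psi> \<sigma> y"
  unfolding unc_upper_def by (subst le_psi_inv_iff) (auto simp: add_increasing2 psi_le_iff)

lemma unc_lower_nonneg: "0 \<le> unc_lower \<psi> \<sigma> y"
  unfolding unc_lower_def by (simp add: psi_inv_nonneg)

lemma psi_unc_lower: "\<psi> (unc_lower \<psi> \<sigma> y) = max (\<psi> 0) (\<psi> y - \<sigma>)"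
  unfolding unc_lower_def by (simp add: psi_psi_inv)

lemma unc_lower_le: "0 \<le> y \<Longrightarrow> 0 \<le> \<sigma> \<Longrightarrow> unc_lower \<psi> \<sigma> y \<le> y"
  unfolding unc_lower_def by (subst psi_inv_le_iff) (auto simp: psi_le_iff)

lemma unc_lower_mono: "0 \<le> x \<Longrightarrow> x \<le> y \<Longrightarrow> unc_lower \<psi> \<sigma> x \<le> unc_lower \<psi> \<sigma> y"
  unfolding unc_lower_def
  by (rule strict_mono_on_leD[OF psi_inv_strict_mono]) (use psi_le_iff[of x y] in auto)

lemma unc_length_mono:
  assumes "0 \<le> x" "x \<le> y" "0 \<le> \<sigma>"
  shows "unc_length \<psi> \<sigma> x \<le> unc_length \<psi> \<sigma> y"
proof -
  define Lx Ly Ux Uy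
    where "Lx = unc_lower \<psi> \<sigma> x" and "Ly = unc_lower \<psi> \<sigma> y"
      and "Ux = unc_upper \<psi> \<sigma> x" and "Uy = unc_upper \<psi> \<sigma> y"
  have "Lx \<le> x" "x \<le> Ux" "y \<le> Uy" "0 \<le> Lx" "Lx \<le> Ly"
    using assms unc_lower_le unc_upper_ge unc_lower_nonneg unc_lower_mono
    unfolding Lx_def Ly_def Ux_def Uy_def by auto
  then have "\<psi> (Ux + (Ly - Lx)) - \<psi> Ux \<le> \<psi> Ly - \<psi> Lx"
    using psi_increment_shift_antimono[of Lx Ux "Ly - Lx"] by simp
  also have "\<dots> \<le> \<psi> y - \<psi> x"
    using assms psi_le_iff[of x y] by (simp add: Lx_def Ly_def psi_unc_lower)
  also have "\<dots> = \<psi> Uy - \<psi> Ux"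
    using assms by (simp add: Ux_def Uy_def psi_unc_upper)
  finally have "\<psi> (Ux + (Ly - Lx)) \<le> \<psi> Uy" by simp
  then have "Ux + (Ly - Lx) \<le> Uy"
    using \<open>x \<le> Ux\<close> \<open>y \<le> Uy\<close> \<open>Lx \<le> Ly\<close> assms psi_le_iff by simp
  then show ?thesis by (simp add: unc_length_def Lx_def Ly_def Ux_def Uy_def)
qed

lemma unc_upper_div_antimono:
  assumes "0 < x" "x \<le> y" "0 \<le> \<sigma>"
  shows "unc_upper \<psi> \<sigma> y / y \<le> unc_upper \<psi> \<sigma> x / x"
proof -
  define l where "l = unc_upper \<psi> \<sigma> x / x"
  have "1 \<le> l" using unc_upper_ge[of x \<sigma>] assms by (simp add: l_def)
  have "\<psi> y + \<sigma> = \<psi> y + (\<psi> (l * x) - \<psi> x)"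
    using assms by (simp add: l_def psi_unc_upper)
  also have "\<dots> \<le> \<psi> (l * y)"
    using psi_increment_scale_mono[OF \<open>0 < x\<close> \<open>x \<le> y\<close> \<open>1 \<le> l\<close>] by simp
  finally have "unc_upper \<psi> \<sigma> y \<le> l * y"
    unfolding unc_upper_def using assms \<open>1 \<le> l\<close>
    by (subst psi_inv_le_iff) (auto simp: add_increasing2 psi_le_iff)
  then show ?thesis using assms by (simp add: l_def divide_le_eq)
qed

lemma unc_lower_div_mono:
  assumes "0 < x" "x \<le> y" "0 \<le> \<sigma>"
  shows "unc_lower \<psi> \<sigma> x / x \<le> unc_lower \<psi> \<sigma> y / y"
proof (cases "unc_lower \<psi> \<sigma> x = 0")
  case True
  then show ?thesis using assms unc_lower_nonneg by simp
next
  case False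
  define L where "L = unc_lower \<psi> \<sigma> x"
  define b where "b = y * L / x"
  have "0 < L" using False unc_lower_nonneg by (simp add: L_def order_less_le)
  then have "\<psi> 0 < \<psi> L" using psi_less_iff[of 0 L] by simp
  then have "\<psi> L = \<psi> x - \<sigma>"
    using psi_unc_lower[of \<sigma> x] by (auto simp: L_def max_def split: if_splits)
  have "L \<le> b" "1 \<le> x / L"
    using \<open>0 < L\<close> assms unc_lower_le[of x \<sigma>] by (auto simp: L_def b_def field_simps)
  have "\<psi> b \<le> \<psi> y - (\<psi> (x / L * L) - \<psi> L)"
    using psi_increment_scale_mono[OF \<open>0 < L\<close> \<open>L \<le> b\<close> \<open>1 \<le> x / L\<close>] \<open>0 < L\<close> assms
    by (simp add: b_def)
  also have "\<dots> = \<psi> y - \<sigma>" using \<open>0 < L\<close> \<open>\<psi> L = \<psi> x - \<sigma>\<close> by simp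
  finally have "b \<le> unc_lower \<psi> \<sigma> y"
    unfolding unc_lower_def using \<open>0 < L\<close> \<open>L \<le> b\<close> by (subst le_psi_inv_iff) auto
  then show ?thesis using assms by (simp add: L_def b_def field_simps)
qed

lemma unc_length_div_antimono:
  assumes "0 < x" "x \<le> y" "0 \<le> \<sigma>"
  shows "unc_length \<psi> \<sigma> y / y \<le> unc_length \<psi> \<sigma> x / x"
  using unc_upper_div_antimono[OF assms] unc_lower_div_mono[OF assms]
  by (simp add: unc_length_def diff_divide_distrib)

end

theorem theorem5p3:
  fixes \<psi> :: "real \<Rightarrow> real" and x y t :: real
  assumes "neighbor_function \<psi>"
    and "0 \<le> x" and "x < y" and "0 \<le> t"
  shows "(bij_betw \<psi> {0..} {\<psi> 0..} \<and> strict_mono_on {\<psi> 0..} (psi_inv \<psi>))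
    \<and> \<bar>\<psi> (y + t) - \<psi> (x + t)\<bar> \<le> \<bar>\<psi> y - \<psi> x\<bar>
    \<and> unc_length \<psi> t y \<ge> unc_length \<psi> t x
    \<and> (0 < x \<longrightarrow> unc_length \<psi> t y / y \<le> unc_length \<psi> t x / x)"
proof -
  interpret neighbor \<psi> using assms(1) by (rule neighbor.intro)
  have "x \<le> y" using assms by simp
  then show ?thesis
    using psi_bij_betw psi_inv_strict_mono abs_psi_increment_shift_le unc_length_mono
      unc_length_div_antimono assms by blast
qed

end
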